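(* In the setting below, take $S=[0,\infty)$. Suppose that for each $\theta\in\Theta$ the function $g(\theta,\cdot)$ is coordinatewise monotone: for $1\le n\le\infty$ and $\mathbf x=(x_i)_{i\le^*n}$, $\mathbf y=(y_i)_{i\le^*n}$ with $x_i\le y_i$ for all $i$, $g(\theta,\mathbf x)\le g(\theta,\mathbf y)$; and that $g(\theta,\cdot)$ is continuous with respect to coordinatewise increasing limits. Suppose the sequence $(T^n(\delta_0))_{n\ge0}$ is tight. Then $T^n(\delta_0)\to\mu$ weakly for some probability measure $\mu$ on $[0,\infty)$, $\mu$ is a fixed point of $T$, and the invariant RTP with marginal $\mu$ is endogenous.
   Context: Setting. Let $(S,\mathcal S)$ and $(\Theta,\mathcal T)$ be measurable spaces and $\Theta^*=\Theta\times\bigsqcup_{0\le m\le\infty}S^m$ (disjoint union; $S^0$ a single point, $S^\infty$ the countable product). Let $g:\Theta^*\to S$ be measurable and $\nu$ a probability measure on $\Theta\times\{0,1,2,\dots,\infty\}$. Write $i\le^* N$ to mean $i\le N$ if $N<\infty$ and $i<\infty$ if $N=\infty$. The induced map $T$ sends a probability measure $\mu$ on $S$ to the law of $g(\xi,X_i,1\le i\le^*N)$, where $(\xi,N)\sim\nu$ and $(X_i)_{i\ge1}$ are i.i.d. with law $\mu$, independent of $(\xi,N)$. A fixed point is a $\mu$ with $T(\mu)=\mu$. Let $\mathbb T$ be the set of finite words $\mathbf i=i_1\cdots i_d$ of positive integers (the empty word $\emptyset$ is the root, $\mathrm{gen}(\mathbf i)=d$, the children of $\mathbf i$ are $\mathbf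 ij$, $j\ge1$), and let $(\xi_{\mathbf i},N_{\mathbf i})$, $\mathbf i\in\mathbb T$, be i.i.d. with law $\nu$. An invariant recursive tree process (RTP) with marginal $\mu$ is a family of $S$-valued random variables $(X_{\mathbf i})_{\mathbf i\in\mathbb T}$ defined on the same probability space such that: each $X_{\mathbf i}$ has law $\mu$; $X_{\mathbf i}=g(\xi_{\mathbf i},X_{\mathbf ij},1\le j\le^*N_{\mathbf i})$ a.s. for every $\mathbf i$; and for every $d$ the variables $\{X_{\mathbf i}:\mathrm{gen}(\mathbf i)=d\}$ are i.i.d. and independent of $\{(\xi_{\mathbf i},N_{\mathbf i}):\mathrm{gen}(\mathbf i)<d\}$. The RTP is endogenous if $X_\emptyset$ is measurable with respect to $\mathcal G=\sigma((\xi_{\mathbf i},N_{\mathbf i}),\mathbf i\in\mathbb T)$. $\delta_0$ is the point mass at $0$. *)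

theory Defs
  imports "HOL-Probability.Probability"
begin

text \<open>
Encoding conventions.
 \<^item> S = [0,\<infinity>) is represented inside the reals; laws on S are real distributions
   (sets = borel) giving mass 1 to {0..}.
 \<^item> Theta* = Theta \<times> (disjoint union of S^m, 0 \<le> m \<le> \<infinity>) is encoded as triples
   (theta, m, x) with m :: enat and x :: nat \<Rightarrow> real, where only the coordinates
   x i with i < m (0-indexed) matter.  So g :: 't \<Rightarrow> enat \<Rightarrow> (nat \<Rightarrow> real) \<Rightarrow> real.
 \<^item> Words of the Ulam-Harris tree are nat lists; the children of w are w @ [j],
   j a natural number (0-indexed), and child j is "used" iff enat j < N_w.
\<close>

definition S_set :: "real set" where
  "S_set = {0..}"

definition S_meas :: "real measure" where
  "S_meas = restrict_space borel S_set"

definition depends_on_prefix :: "('t \<Rightarrow> enat \<Rightarrow> (nat \<Rightarrow> real) \<Rightarrow> real) \<Rightarrow> bool" where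
  "depends_on_prefix g \<longleftrightarrow>
     (\<forall>\<theta> m x y. (\<forall>i. enat i < m \<longrightarrow> x i = y i) \<longrightarrow> g \<theta> m x = g \<theta> m y)"

definition law_on_S :: "real measure \<Rightarrow> bool" where
  "law_on_S \<mu> \<longleftrightarrow> real_distribution \<mu> \<and> emeasure \<mu> S_set = 1"

definition Tmap :: "('t \<times> enat) measure \<Rightarrow> ('t \<Rightarrow> enat \<Rightarrow> (nat \<Rightarrow> real) \<Rightarrow> real)
                     \<Rightarrow> real measure \<Rightarrow> real measure" where
  "Tmap \<nu> g \<mu> =
     distr (\<nu> \<Otimes>\<^sub>M (\<Pi>\<^sub>M i\<in>(UNIV::nat set). restrict_space \<mu> S_set)) borel
           (\<lambda>((\<theta>, m), x). g \<theta> m x)"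

definition G_sets :: "'w measure \<Rightarrow> ('t \<times> enat) measure \<Rightarrow> (nat list \<Rightarrow> 'w \<Rightarrow> 't \<times> enat) \<Rightarrow> 'w measure" where
  "G_sets P M\<nu> XiN = sigma (space P) (\<Union>w. {XiN w -` A \<inter> space P | A. A \<in> sets M\<nu>})"

definition invariant_RTP ::
  "'w measure \<Rightarrow> 't measure \<Rightarrow> ('t \<times> enat) measure \<Rightarrow> ('t \<Rightarrow> enat \<Rightarrow> (nat \<Rightarrow> real) \<Rightarrow> real)
   \<Rightarrow> real measure \<Rightarrow> (nat list \<Rightarrow> 'w \<Rightarrow> 't \<times> enat) \<Rightarrow> (nat list \<Rightarrow> 'w \<Rightarrow> real) \<Rightarrow> bool" where
  "invariant_RTP P T \<nu> g \<mu> XiN X \<longleftrightarrow>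
     prob_space P \<and>
     \<comment> \<open>(xi_w, N_w), w in the tree, are i.i.d. with law nu\<close>
     (\<forall>w. XiN w \<in> measurable P (T \<Otimes>\<^sub>M count_space UNIV) \<and> distr P (T \<Otimes>\<^sub>M count_space UNIV) (XiN w) = \<nu>) \<and>
     prob_space.indep_vars P (\<lambda>_. T \<Otimes>\<^sub>M count_space UNIV) XiN UNIV \<and>
     \<comment> \<open>each X_w has law mu\<close>
     (\<forall>w. X w \<in> borel_measurable P \<and> distr P borel (X w) = \<mu>) \<and>
     \<comment> \<open>recursion X_w = g(xi_w, X_{wj}, j <* N_w) a.s.\<close>
     (\<forall>w. AE \<omega> in P. X w \<omega> = g (fst (XiN w \<omega>)) (snd (XiN w \<omega>)) (\<lambda>j. X (w @ [j]) \<omega>)) \<and>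
     \<comment> \<open>generation d values are i.i.d. and independent of the innovations of generations < d\<close>
     (\<forall>d. prob_space.indep_vars P (\<lambda>_. borel) X {w. length w = d} \<and>
          prob_space.indep_set P
            (sets (vimage_algebra (space P) (\<lambda>\<omega>. \<lambda>w\<in>{w. length w = d}. X w \<omega>)
                     (\<Pi>\<^sub>M w\<in>{w. length w = d}. borel)))
            (sets (vimage_algebra (space P) (\<lambda>\<omega>. \<lambda>w\<in>{w. length w < d}. XiN w \<omega>)
                     (\<Pi>\<^sub>M w\<in>{w. length w < d}. T \<Otimes>\<^sub>M count_space UNIV))))"

definition endogenous ::
  "'w measure \<Rightarrow> ('t \<times> enat) measure \<Rightarrow> (nat list \<Rightarrow> 'w \<Rightarrow> 't \<times> enat) \<Rightarrow> (nat list \<Rightarrow> 'w \<Rightarrow> real) \<Rightarrow> bool" where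
  "endogenous P M\<nu> XiN X \<longleftrightarrow>
     (\<exists>Y. Y \<in> borel_measurable (G_sets P M\<nu> XiN) \<and> (AE \<omega> in P. X [] \<omega> = Y \<omega>))"

end

theory Submission
  imports Defs
begin

text \<open>Realise all innovations on the canonical product space of the tree and let
  depth_value n be the root value of the recursion with the values at generation n set
  to 0; its law is T^n applied to the point mass at 0. Monotonicity of g makes
  depth_value n increase in n, and tightness makes the limit root_limit almost surely
  finite, which gives weak convergence of these iterates to the law \<mu> of root_limit.
  Continuity of g along increasing limits shows that root_limit solves the recursion,
  so T \<mu> = \<mu>. Finally, in any invariant RTP with marginal \<mu> the values are nonnegative,
  so by monotonicity and induction on n they dominate depth_value n evaluated at the
  innovations below them. Hence the value at the root dominates root_limit of the
  innovations, a G-measurable variable with the same law \<mu>, and the two agree almost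
  surely.\<close>

lemma indep_vars_PiM_coordinates:
  assumes M: "\<And>i. i \<in> I \<Longrightarrow> prob_space (M i)" and I: "I \<noteq> {}"
  shows "prob_space.indep_vars (PiM I M) M (\<lambda>i x. x i) I"
proof -
  interpret prob_space "PiM I M" using M by (rule prob_space_PiM)
  have "distr (PiM I M) (PiM I M) (\<lambda>x. \<lambda>i\<in>I. x i) = PiM I M"
    by (subst distr_cong[where g = "\<lambda>x. x"]) (auto simp: space_PiM PiE_def extensional_restrict)
  also have "\<dots> = PiM I (\<lambda>i. distr (PiM I M) (M i) (\<lambda>x. x i))"
    by (rule PiM_cong) (auto simp: distr_PiM_component M)
  finally show ?thesis
    by (subst indep_vars_iff_distr_eq_PiM'[OF I]) auto
qed

lemma incseq_tendsto_real_of_ereal_SUP: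
  fixes f :: "nat \<Rightarrow> real"
  assumes inc: "incseq f" and fin: "(SUP n. ereal (f n)) < \<infinity>"
  shows "f \<longlonglongrightarrow> real_of_ereal (SUP n. ereal (f n))"
proof -
  have "ereal (f 0) \<le> (SUP n. ereal (f n))" by (rule SUP_upper) simp
  then have "(SUP n. ereal (f n)) = ereal (real_of_ereal (SUP n. ereal (f n)))"
    using fin by (cases "SUP n. ereal (f n)") auto
  moreover have "(\<lambda>n. ereal (f n)) \<longlonglongrightarrow> (SUP n. ereal (f n))"
    using inc by (intro LIMSEQ_SUP) (auto simp: incseq_def)
  ultimately show ?thesis by (metis lim_ereal)
qed

text \<open>Since arctan is bounded and strictly increasing, no integrability assumption is needed.\<close>
lemma (in prob_space) AE_eq_if_AE_le_and_distr_eq: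
  fixes X Y :: "'a \<Rightarrow> real"
  assumes X: "X \<in> borel_measurable M" and Y: "Y \<in> borel_measurable M"
    and le: "AE x in M. Y x \<le> X x" and eq: "distr M borel X = distr M borel Y"
  shows "AE x in M. X x = Y x"
proof -
  have bounded: "norm (arctan x) \<le> pi" for x
    using arctan_bounded[of x] pi_gt_zero by (simp add: abs_le_iff)
  have int: "integrable M (\<lambda>x. arctan (Z x))" if "Z \<in> borel_measurable M" for Z
    by (rule integrable_const_bound[where B = pi]) (use bounded that in auto)
  define D where "D x = arctan (X x) - arctan (Y x)" for x
  have "integral\<^sup>L M D = (\<integral>x. arctan x \<partial>distr M borel X) - (\<integral>x. arctan x \<partial>distr M borel Y)"
    unfolding D_def using int[OF X] int[OF Y] X Y by (simp add: integral_distr)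
  then have "integral\<^sup>L M D = 0" by (simp add: eq)
  moreover have "AE x in M. 0 \<le> D x"
    using le by eventually_elim (simp add: D_def arctan_le_iff)
  moreover have "integrable M D"
    unfolding D_def using int[OF X] int[OF Y] by (rule Bochner_Integration.integrable_diff)
  ultimately have "AE x in M. D x = 0"
    using integral_nonneg_eq_0_iff_AE by blast
  then show ?thesis by eventually_elim (simp add: D_def arctan_eq_iff)
qed

lemma (in prob_space) cdf_distr:
  "X \<in> borel_measurable M \<Longrightarrow> cdf (distr M borel X) b = prob {x \<in> space M. X x \<le> b}"
  unfolding cdf_def by (simp add: measure_distr vimage_def Int_def conj_commute)

lemma (in prob_space) tendsto_prob_le_incseq:
  fixes F :: "nat \<Rightarrow> 'a \<Rightarrow> real"
  assumes F: "\<And>n. F n \<in> borel_measurable M"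
    and inc: "\<And>x. x \<in> space M \<Longrightarrow> incseq (\<lambda>n. F n x)"
  shows "(\<lambda>n. prob {x \<in> space M. F n x \<le> b}) \<longlonglongrightarrow> prob {x \<in> space M. \<forall>n. F n x \<le> b}"
proof -
  define B where "B n = {x \<in> space M. F n x \<le> b}" for n
  have "decseq B"
    using inc unfolding decseq_def B_def by (auto simp: incseq_def intro: order_trans)
  moreover have "B n \<in> events" for n
    unfolding B_def using F by measurable
  ultimately have "(\<lambda>n. prob (B n)) \<longlonglongrightarrow> prob (\<Inter>n. B n)"
    by (intro finite_Lim_measure_decseq) auto
  also have "(\<Inter>n. B n) = {x \<in> space M. \<forall>n. F n x \<le> b}"
    by (auto simp: B_def)
  finally show ?thesis unfolding B_def .
qed

lemma (in prob_space) AE_SUP_less_infinity_if_tight: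
  fixes F :: "nat \<Rightarrow> 'a \<Rightarrow> real"
  assumes F: "\<And>n. F n \<in> borel_measurable M"
    and inc: "\<And>x. x \<in> space M \<Longrightarrow> incseq (\<lambda>n. F n x)"
    and tight: "tight (\<lambda>n. distr M borel (F n))"
  shows "AE x in M. (SUP n. ereal (F n x)) < \<infinity>"
proof -
  define A where "A = {x \<in> space M. (SUP n. ereal (F n x)) < \<infinity>}"
  have A: "A \<in> events" unfolding A_def using F by measurable
  have "1 \<le> prob A + e" if "e > 0" for e
  proof -
    obtain a b where mass: "\<And>n. measure (distr M borel (F n)) {a<..b} > 1 - e"
      using tight \<open>e > 0\<close> unfolding tight_def by blast
    have "1 - e \<le> prob {x \<in> space M. F n x \<le> b}" for n
    proof -
      have "measure (distr M borel (F n)) {a<..b} \<le> cdf (distr M borel (F n)) b"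
        unfolding cdf_def using F
        by (intro finite_measure.finite_measure_mono prob_space.finite_measure prob_space_distr)
          auto
      then show ?thesis using mass[of n] F by (simp add: cdf_distr)
    qed
    then have "1 - e \<le> prob {x \<in> space M. \<forall>n. F n x \<le> b}"
      by (intro LIMSEQ_le_const[OF tendsto_prob_le_incseq[OF F inc]]) auto
    also have "\<dots> \<le> prob A"
    proof (intro finite_measure_mono A subsetI)
      fix x assume "x \<in> {x \<in> space M. \<forall>n. F n x \<le> b}"
      then have "x \<in> space M" and "(SUP n. ereal (F n x)) \<le> ereal b"
        by (auto intro: SUP_least)
      then show "x \<in> A" by (auto simp: A_def)
    qed
    finally show ?thesis by simp
  qed
  then have "1 \<le> prob A" by (rule field_le_epsilon)
  then have "prob A = 1" using prob_le_1[of A] by simp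
  then show ?thesis
    using AE_prob_1[of A] by (auto simp: A_def)
qed

text \<open>For monotone sequences the cdfs converge at every point, not only at continuity points.\<close>
lemma (in prob_space) weak_conv_m_distr_incseq:
  fixes F :: "nat \<Rightarrow> 'a \<Rightarrow> real"
  assumes F: "\<And>n. F n \<in> borel_measurable M" and F': "F' \<in> borel_measurable M"
    and inc: "\<And>x. x \<in> space M \<Longrightarrow> incseq (\<lambda>n. F n x)"
    and lim: "AE x in M. (\<lambda>n. F n x) \<longlonglongrightarrow> F' x"
  shows "weak_conv_m (\<lambda>n. distr M borel (F n)) (distr M borel F')"
  unfolding weak_conv_m_def weak_conv_def
proof (intro allI impI)
  fix b :: real
  have "prob {x \<in> space M. \<forall>n. F n x \<le> b} = prob {x \<in> space M. F' x \<le> b}"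
  proof (rule measure_eq_AE)
    show "AE x in M. (x \<in> {x \<in> space M. \<forall>n. F n x \<le> b}) = (x \<in> {x \<in> space M. F' x \<le> b})"
      using lim AE_space
    proof eventually_elim
      case (elim x)
      then show ?case
        using incseq_le[OF inc[OF elim(2)] elim(1)] LIMSEQ_le_const2[OF elim(1)]
        by (auto intro: order_trans)
    qed
  qed (use F F' in measurable)
  then show "(\<lambda>n. cdf (distr M borel (F n)) b) \<longlonglongrightarrow> cdf (distr M borel F') b"
    using tendsto_prob_le_incseq[OF F inc, of b] F F' by (simp add: cdf_distr)
qed

lemma space_G_sets: "space (G_sets P M XiN) = space P"
  unfolding G_sets_def by (rule space_measure_of) auto

lemma measurable_G_sets:
  assumes "XiN w \<in> space P \<rightarrow> space M"
  shows "XiN w \<in> measurable (G_sets P M XiN) M"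
proof (rule measurableI)
  let ?E = "\<Union>w. {XiN w -` A \<inter> space P | A. A \<in> sets M}"
  fix A assume "A \<in> sets M"
  then have "XiN w -` A \<inter> space P \<in> sigma_sets (space P) ?E" by blast
  then show "XiN w -` A \<inter> space (G_sets P M XiN) \<in> sets (G_sets P M XiN)"
    unfolding space_G_sets unfolding G_sets_def by (subst sets_measure_of) auto
qed (use assms in \<open>auto simp: space_G_sets\<close>)

lemma one_le_enat_iff: "1 \<le> (n :: enat) \<longleftrightarrow> n \<noteq> 0"
  by (cases n) (auto simp: one_enat_def zero_enat_def)

lemma measurable_S_meas_iff:
  "f \<in> measurable M S_meas \<longleftrightarrow> f \<in> borel_measurable M \<and> (\<forall>x\<in>space M. 0 \<le> f x)"
  by (auto simp: S_meas_def S_set_def measurable_restrict_space2_iff)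

definition subtree :: "nat \<Rightarrow> (nat list \<Rightarrow> 'a) \<Rightarrow> nat list \<Rightarrow> 'a" where
  "subtree j x = (\<lambda>v. x (j # v))"

locale RTP_model =
  fixes T :: "'t measure" and \<nu> :: "('t \<times> enat) measure"
    and g :: "'t \<Rightarrow> enat \<Rightarrow> (nat \<Rightarrow> real) \<Rightarrow> real"
  assumes nu_prob: "prob_space \<nu>"
    and nu_sets: "sets \<nu> = sets (T \<Otimes>\<^sub>M count_space UNIV)"
    and g_meas: "(\<lambda>((\<theta>, m), x). g \<theta> m x)
        \<in> measurable ((T \<Otimes>\<^sub>M count_space UNIV) \<Otimes>\<^sub>M (\<Pi>\<^sub>M i\<in>(UNIV::nat set). S_meas)) S_meas"
begin

definition tree_space :: "(nat list \<Rightarrow> 't \<times> enat) measure" where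
  "tree_space = PiM UNIV (\<lambda>_. \<nu>)"

definition tree_rec :: "((nat list \<Rightarrow> 't \<times> enat) \<Rightarrow> real) \<Rightarrow> (nat list \<Rightarrow> 't \<times> enat) \<Rightarrow> real" where
  "tree_rec f x = g (fst (x [])) (snd (x [])) (\<lambda>j. f (subtree j x))"

lemma space_nu: "space \<nu> = space T \<times> UNIV"
  using sets_eq_imp_space_eq[OF nu_sets] by (simp add: space_pair_measure)

lemma prob_space_tree_space: "prob_space tree_space"
  unfolding tree_space_def by (intro prob_space_PiM nu_prob)

lemma space_tree_space: "space tree_space = {x. \<forall>u. x u \<in> space \<nu>}"
  unfolding tree_space_def by (auto simp: space_PiM PiE_def Pi_def)

lemma subtree_in_space: "x \<in> space tree_space \<Longrightarrow> subtree j x \<in> space tree_space"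
  by (simp add: space_tree_space subtree_def)

lemma measurable_subtree:
  assumes "\<And>v. j # v \<in> K"
  shows "subtree j \<in> measurable (PiM K (\<lambda>_. \<nu>)) tree_space"
  unfolding tree_space_def subtree_def[abs_def] using assms
  by (intro measurable_PiM_single') (auto simp: space_PiM PiE_def Pi_def)

lemma distr_subtree:
  assumes "\<And>v. j # v \<in> K"
  shows "distr (PiM K (\<lambda>_. \<nu>)) tree_space (subtree j) = tree_space"
proof -
  have "distr (PiM K (\<lambda>_. \<nu>)) (\<Pi>\<^sub>M v\<in>UNIV. \<nu>) (\<lambda>x. \<lambda>v\<in>UNIV. x (j # v)) = (\<Pi>\<^sub>M v\<in>UNIV. \<nu>)"
    using assms distr_PiM_reindex[of K "\<lambda>_. \<nu>" "Cons j" UNIV] nu_prob by auto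
  then show ?thesis by (simp add: tree_space_def subtree_def[abs_def] restrict_def)
qed

lemma measurable_subtree_tree_space: "subtree j \<in> measurable tree_space tree_space"
  using measurable_subtree[of j UNIV] by (simp add: tree_space_def)

lemma distr_subtree_tree_space: "distr tree_space tree_space (subtree j) = tree_space"
  using distr_subtree[of j UNIV] by (simp add: tree_space_def)

lemma measurable_tree_rec:
  assumes f: "f \<in> measurable tree_space S_meas"
  shows "tree_rec f \<in> measurable tree_space S_meas"
proof -
  have "(\<lambda>x. x []) \<in> measurable tree_space \<nu>"
    unfolding tree_space_def by simp
  then have root: "(\<lambda>x. x []) \<in> measurable tree_space (T \<Otimes>\<^sub>M count_space UNIV)"
    by (simp add: measurable_cong_sets[OF refl nu_sets])
  note sub = measurable_subtree_tree_space
  have children: "(\<lambda>x j. f (subtree j x)) \<in> measurable tree_space (\<Pi>\<^sub>M j\<in>UNIV. S_meas)"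
    using measurable_compose[OF sub f] measurable_space[OF sub] measurable_space[OF f]
    by (intro measurable_PiM_single') auto
  have "(\<lambda>x. (x [], \<lambda>j. f (subtree j x)))
      \<in> measurable tree_space ((T \<Otimes>\<^sub>M count_space UNIV) \<Otimes>\<^sub>M (\<Pi>\<^sub>M j\<in>UNIV. S_meas))"
    using root children by (rule measurable_Pair)
  from measurable_compose[OF this g_meas] show ?thesis
    by (simp add: tree_rec_def[abs_def] case_prod_beta)
qed

lemma distr_subtree_values:
  assumes f: "f \<in> measurable tree_space N" and K: "\<And>j v. j # v \<in> K"
  shows "distr (PiM K (\<lambda>_. \<nu>)) (\<Pi>\<^sub>M j\<in>(UNIV::nat set). N) (\<lambda>x j. f (subtree j x))
    = (\<Pi>\<^sub>M j\<in>(UNIV::nat set). distr tree_space N f)"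
proof -
  interpret prob_space "PiM K (\<lambda>_. \<nu>)" by (intro prob_space_PiM nu_prob)
  have "indep_vars (\<lambda>_. \<nu>) (\<lambda>u x. x u) K"
    using K by (intro indep_vars_PiM_coordinates nu_prob) blast
  then have "indep_vars (\<lambda>j. PiM (range (Cons j)) (\<lambda>_. \<nu>)) (\<lambda>j x. restrict x (range (Cons j))) UNIV"
    using K by (intro indep_vars_restrict[where X = "\<lambda>u x. x u", simplified eta_contract_eq])
      (auto simp: disjoint_family_on_def)
  then have "indep_vars (\<lambda>_. N) (\<lambda>j x. f (subtree j (restrict x (range (Cons j))))) UNIV"
    by (rule indep_vars_compose2) (intro measurable_compose[OF measurable_subtree f], simp)
  then have indep: "indep_vars (\<lambda>_. N) (\<lambda>j x. f (subtree j x)) UNIV"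
    by (simp add: subtree_def)
  have "distr (PiM K (\<lambda>_. \<nu>)) (\<Pi>\<^sub>M j\<in>UNIV. N) (\<lambda>x j. f (subtree j x))
      = (\<Pi>\<^sub>M j\<in>UNIV. distr (PiM K (\<lambda>_. \<nu>)) N (\<lambda>x. f (subtree j x)))"
    using indep_vars_iff_distr_eq_PiM[where I = UNIV and M' = "\<lambda>_. N"
        and X = "\<lambda>j x. f (subtree j x)"] indep measurable_compose[OF measurable_subtree f] K
    by (simp add: restrict_def)
  also have "\<dots> = (\<Pi>\<^sub>M j\<in>UNIV. distr tree_space N f)"
  proof (rule PiM_cong[OF refl])
    fix j
    show "distr (PiM K (\<lambda>_. \<nu>)) N (\<lambda>x. f (subtree j x)) = distr tree_space N f"
      using distr_distr[OF f measurable_subtree[of j K]] distr_subtree[of j K] K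
      by (simp add: comp_def)
  qed
  finally show ?thesis .
qed

lemma measurable_graft_root:
  "(\<lambda>(r, y). y([] := r)) \<in> measurable (\<nu> \<Otimes>\<^sub>M PiM (- {[]}) (\<lambda>_. \<nu>)) tree_space"
  unfolding tree_space_def
proof (rule measurable_PiM_single')
  fix u :: "nat list"
  show "(\<lambda>p. (case p of (r, y) \<Rightarrow> y([] := r)) u) \<in> measurable (\<nu> \<Otimes>\<^sub>M PiM (- {[]}) (\<lambda>_. \<nu>)) \<nu>"
  proof (cases "u = []")
    case False
    then have "(\<lambda>p. snd p u) \<in> measurable (\<nu> \<Otimes>\<^sub>M PiM (- {[]}) (\<lambda>_. \<nu>)) \<nu>"
      by (intro measurable_compose[OF measurable_snd measurable_component_singleton]) auto
    with False show ?thesis by (simp add: case_prod_beta)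
  qed (simp add: case_prod_beta)
qed (auto simp: space_pair_measure space_PiM PiE_def Pi_def)

lemma distr_graft_root:
  "distr (\<nu> \<Otimes>\<^sub>M PiM (- {[]}) (\<lambda>_. \<nu>)) tree_space (\<lambda>(r, y). y([] := r)) = tree_space"
proof -
  have "insert [] (- {[]}) = (UNIV :: nat list set)" by auto
  then show ?thesis
    unfolding tree_space_def by (metis distr_pair_PiM_eq_PiM nu_prob)
qed

lemma borel_measurable_g:
  "(\<lambda>((\<theta>, m), x). g \<theta> m x) \<in> borel_measurable (\<nu> \<Otimes>\<^sub>M (\<Pi>\<^sub>M j\<in>(UNIV::nat set). S_meas))"
  using measurable_compose[OF g_meas measurable_ident_sets[OF refl]]
  unfolding measurable_S_meas_iff
  by (simp add: measurable_cong_sets[OF sets_pair_measure_cong[OF nu_sets refl] refl])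

text \<open>The innovation at the root is independent of the subtrees, which are i.i.d. copies
  of the whole tree.\<close>
lemma distr_tree_rec:
  assumes f: "f \<in> measurable tree_space S_meas"
  shows "distr tree_space borel (tree_rec f) = Tmap \<nu> g (distr tree_space borel f)"
proof -
  define off_root where "off_root = PiM (- {[]}) (\<lambda>_::nat list. \<nu>)"
  define children where "children y = (\<lambda>j. f (subtree j y))" for y
  define G where "G = (\<lambda>((\<theta>, m), x). g \<theta> m x)"
  let ?S = "\<Pi>\<^sub>M j\<in>(UNIV::nat set). S_meas"
  interpret off_root: prob_space off_root unfolding off_root_def by (intro prob_space_PiM nu_prob)
  have sub: "subtree j \<in> measurable off_root tree_space" for j
    unfolding off_root_def by (rule measurable_subtree) simp
  then have children: "children \<in> measurable off_root ?S"
    unfolding children_def using measurable_compose[OF sub f] measurable_space[OF sub]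
      measurable_space[OF f]
    by (intro measurable_PiM_single') auto
  have children_distr: "distr off_root ?S children = (\<Pi>\<^sub>M j\<in>UNIV. distr tree_space S_meas f)"
    unfolding off_root_def children_def[abs_def] using f by (rule distr_subtree_values) simp
  have G: "G \<in> borel_measurable (\<nu> \<Otimes>\<^sub>M ?S)"
    unfolding G_def by (rule borel_measurable_g)
  have tree_rec: "tree_rec f \<in> borel_measurable tree_space"
    using measurable_tree_rec[OF f] by (simp add: measurable_S_meas_iff)
  have split: "(\<lambda>(r, y). (r, children y)) \<in> measurable (\<nu> \<Otimes>\<^sub>M off_root) (\<nu> \<Otimes>\<^sub>M ?S)"
    using children by (simp add: case_prod_beta')
  have "distr tree_space borel (tree_rec f)
      = distr (\<nu> \<Otimes>\<^sub>M off_root) borel (tree_rec f \<circ> (\<lambda>(r, y). y([] := r)))"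
    using distr_distr[OF tree_rec measurable_graft_root[folded off_root_def]]
    by (simp add: distr_graft_root[folded off_root_def])
  also have "\<dots> = distr (\<nu> \<Otimes>\<^sub>M off_root) borel (G \<circ> (\<lambda>(r, y). (r, children y)))"
    by (rule distr_cong) (auto simp: tree_rec_def G_def children_def subtree_def)
  also have "\<dots> = distr (distr (\<nu> \<Otimes>\<^sub>M off_root) (\<nu> \<Otimes>\<^sub>M ?S) (\<lambda>(r, y). (r, children y))) borel G"
    using distr_distr[OF G split] by simp
  also have "distr (\<nu> \<Otimes>\<^sub>M off_root) (\<nu> \<Otimes>\<^sub>M ?S) (\<lambda>(r, y). (r, children y))
      = \<nu> \<Otimes>\<^sub>M distr off_root ?S children"
    using pair_measure_distr[OF measurable_ident children
        prob_space_imp_sigma_finite[OF off_root.prob_space_distr[OF children]], of \<nu>]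
    by (simp add: id_def)
  also have "distr off_root ?S children
      = (\<Pi>\<^sub>M j\<in>UNIV. restrict_space (distr tree_space borel f) S_set)"
    using f unfolding children_distr unfolding S_meas_def
    by (subst restrict_distr) (auto simp: measurable_restrict_space2_iff S_set_def)
  finally show ?thesis unfolding Tmap_def G_def .
qed

lemma innovations_of_invariant_RTP:
  assumes RTP: "invariant_RTP P T \<nu> g \<mu> XiN X"
  shows "(\<lambda>\<omega> w. XiN w \<omega>) \<in> measurable (G_sets P \<nu> XiN) tree_space"
    and "(\<lambda>\<omega> w. XiN w \<omega>) \<in> measurable P tree_space"
    and "distr P tree_space (\<lambda>\<omega> w. XiN w \<omega>) = tree_space"
proof -
  interpret prob_space P using RTP by (simp add: invariant_RTP_def)
  let ?TN = "T \<Otimes>\<^sub>M count_space UNIV"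
  have XiN: "\<And>w. XiN w \<in> measurable P ?TN"
    and law: "\<And>w. distr P ?TN (XiN w) = \<nu>"
    and indep: "indep_vars (\<lambda>_. ?TN) XiN UNIV"
    using RTP unfolding invariant_RTP_def by auto
  have XiN_nu: "XiN w \<in> measurable P \<nu>" for w
    using XiN by (simp add: measurable_cong_sets[OF refl nu_sets])
  have XiN_G: "XiN w \<in> measurable (G_sets P \<nu> XiN) \<nu>" for w
    by (auto intro!: measurable_G_sets measurable_space[OF XiN_nu])
  show "(\<lambda>\<omega> w. XiN w \<omega>) \<in> measurable (G_sets P \<nu> XiN) tree_space"
    unfolding tree_space_def using XiN_G measurable_space[OF XiN_G]
    by (intro measurable_PiM_single') auto
  show "(\<lambda>\<omega> w. XiN w \<omega>) \<in> measurable P tree_space"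
    unfolding tree_space_def using XiN_nu measurable_space[OF XiN_nu]
    by (intro measurable_PiM_single') auto
  have "sets tree_space = sets (\<Pi>\<^sub>M w\<in>UNIV. ?TN)"
    unfolding tree_space_def by (intro sets_PiM_cong) (simp_all add: nu_sets)
  then have "distr P tree_space (\<lambda>\<omega> w. XiN w \<omega>) = distr P (\<Pi>\<^sub>M w\<in>UNIV. ?TN) (\<lambda>\<omega>. \<lambda>w\<in>UNIV. XiN w \<omega>)"
    by (intro distr_cong) auto
  also have "\<dots> = (\<Pi>\<^sub>M w\<in>UNIV. distr P ?TN (XiN w))"
    using indep_vars_iff_distr_eq_PiM[where I = UNIV and M' = "\<lambda>_. ?TN" and X = XiN] indep XiN
    by simp
  finally show "distr P tree_space (\<lambda>\<omega> w. XiN w \<omega>) = tree_space"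
    by (simp add: law tree_space_def)
qed

end

locale monotone_RTP = RTP_model T \<nu> g
  for T :: "'t measure" and \<nu> :: "('t \<times> enat) measure"
    and g :: "'t \<Rightarrow> enat \<Rightarrow> (nat \<Rightarrow> real) \<Rightarrow> real" +
  assumes g_prefix: "depends_on_prefix g"
    and g_mono: "\<And>\<theta> n x y. \<theta> \<in> space T \<Longrightarrow> 1 \<le> n \<Longrightarrow>
        (\<forall>i. x i \<in> S_set) \<Longrightarrow> (\<forall>i. y i \<in> S_set) \<Longrightarrow>
        (\<forall>i. enat i < n \<longrightarrow> x i \<le> y i) \<Longrightarrow> g \<theta> n x \<le> g \<theta> n y"
    and g_cont: "\<And>\<theta> n xs x. \<theta> \<in> space T \<Longrightarrow> 1 \<le> n \<Longrightarrow>
        (\<forall>k i. xs k i \<in> S_set) \<Longrightarrow> (\<forall>i. x i \<in> S_set) \<Longrightarrow>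
        (\<forall>i. enat i < n \<longrightarrow> incseq (\<lambda>k. xs k i) \<and> (\<lambda>k. xs k i) \<longlonglongrightarrow> x i) \<Longrightarrow>
        (\<lambda>k. g \<theta> n (xs k)) \<longlonglongrightarrow> g \<theta> n x"
    and tight_iter: "tight (\<lambda>n. (Tmap \<nu> g ^^ n) (return borel 0))"
begin

lemma g_no_children: "g \<theta> 0 x = g \<theta> 0 y"
  using g_prefix[unfolded depends_on_prefix_def, rule_format, of 0 x y \<theta>] by simp

lemma g_mono_on_space:
  assumes p: "p \<in> space \<nu>" and a: "\<And>j. 0 \<le> a j" and ab: "\<And>j. a j \<le> b j"
  shows "g (fst p) (snd p) a \<le> g (fst p) (snd p) b"
proof (cases "snd p = 0")
  case True
  then show ?thesis by (metis g_no_children order_refl)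
next
  case False
  then show ?thesis
    using p a ab order_trans[OF a ab]
    by (intro g_mono) (auto simp: one_le_enat_iff space_nu S_set_def mem_Times_iff)
qed

lemma g_tendsto_on_space:
  assumes p: "p \<in> space \<nu>" and xs: "\<And>k j. 0 \<le> xs k j"
    and inc: "\<And>j. incseq (\<lambda>k. xs k j)" and lim: "\<And>j. (\<lambda>k. xs k j) \<longlonglongrightarrow> x j"
  shows "(\<lambda>k. g (fst p) (snd p) (xs k)) \<longlonglongrightarrow> g (fst p) (snd p) x"
proof (cases "snd p = 0")
  case True
  then have "g (fst p) (snd p) (xs k) = g (fst p) (snd p) x" for k
    by (metis g_no_children)
  then show ?thesis by simp
next
  case False
  have "0 \<le> x j" for j
    using lim[of j] xs by (intro LIMSEQ_le_const) auto
  with False show ?thesis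
    using p xs inc lim
    by (intro g_cont) (auto simp: one_le_enat_iff space_nu S_set_def mem_Times_iff)
qed

primrec depth_value :: "nat \<Rightarrow> (nat list \<Rightarrow> 't \<times> enat) \<Rightarrow> real" where
  "depth_value 0 = (\<lambda>_. 0)"
| "depth_value (Suc n) = tree_rec (depth_value n)"

lemma measurable_depth_value: "depth_value n \<in> measurable tree_space S_meas"
proof (induction n)
  case (Suc n)
  then show ?case by (simp add: measurable_tree_rec)
qed (simp add: measurable_S_meas_iff)

lemma depth_value_nonneg: "x \<in> space tree_space \<Longrightarrow> 0 \<le> depth_value n x"
  using measurable_depth_value by (simp add: measurable_S_meas_iff)

lemma distr_depth_value: "distr tree_space borel (depth_value n) = (Tmap \<nu> g ^^ n) (return borel 0)"
proof (induction n)
  case 0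
  interpret prob_space tree_space by (rule prob_space_tree_space)
  show ?case by simp
next
  case (Suc n)
  then show ?case using distr_tree_rec[OF measurable_depth_value] by simp
qed

lemma incseq_depth_value:
  assumes "x \<in> space tree_space"
  shows "incseq (\<lambda>n. depth_value n x)"
proof -
  have "depth_value n x \<le> depth_value (Suc n) x" if "x \<in> space tree_space" for n x
    using that
  proof (induction n arbitrary: x)
    case 0
    then show ?case by (simp add: depth_value_nonneg del: depth_value.simps(2))
  next
    case (Suc n)
    have "depth_value n (subtree j x) \<le> depth_value (Suc n) (subtree j x)" for j
      using Suc subtree_in_space by blast
    moreover have "x [] \<in> space \<nu>"
      using Suc.prems by (simp add: space_tree_space)
    ultimately show ?case
      unfolding depth_value.simps(2)[of "Suc n"] depth_value.simps(2)[of n] tree_rec_def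
      using Suc.prems by (intro g_mono_on_space) (auto simp: subtree_in_space depth_value_nonneg)
  qed
  with assms show ?thesis by (simp add: incseq_Suc_iff)
qed

definition root_limit :: "(nat list \<Rightarrow> 't \<times> enat) \<Rightarrow> real" where
  "root_limit x = real_of_ereal (SUP n. ereal (depth_value n x))"

lemma root_limit_nonneg: "0 \<le> root_limit x"
proof -
  have "ereal (depth_value 0 x) \<le> (SUP n. ereal (depth_value n x))"
    by (rule SUP_upper) simp
  then show ?thesis
    unfolding root_limit_def by (intro real_of_ereal_pos) (simp add: zero_ereal_def)
qed

lemma measurable_root_limit: "root_limit \<in> measurable tree_space S_meas"
proof -
  have "depth_value n \<in> borel_measurable tree_space" for n
    using measurable_depth_value by (simp add: measurable_S_meas_iff)
  then have "root_limit \<in> borel_measurable tree_space"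
    unfolding root_limit_def[abs_def] by measurable
  then show ?thesis by (simp add: measurable_S_meas_iff root_limit_nonneg)
qed

lemma AE_depth_value_tendsto: "AE x in tree_space. (\<lambda>n. depth_value n x) \<longlonglongrightarrow> root_limit x"
proof -
  interpret prob_space tree_space by (rule prob_space_tree_space)
  have "AE x in tree_space. (SUP n. ereal (depth_value n x)) < \<infinity>"
    using measurable_depth_value incseq_depth_value tight_iter
    by (intro AE_SUP_less_infinity_if_tight) (auto simp: measurable_S_meas_iff distr_depth_value)
  with AE_space show ?thesis
    unfolding root_limit_def
    by eventually_elim (auto intro: incseq_tendsto_real_of_ereal_SUP incseq_depth_value)
qed

lemma AE_root_limit_tree_rec: "AE x in tree_space. root_limit x = tree_rec root_limit x"
proof -
  have "AE x in tree_space. \<forall>j. (\<lambda>n. depth_value n (subtree j x)) \<longlonglongrightarrow> root_limit (subtree j x)"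
  proof (subst AE_all_countable, intro allI)
    fix j
    have "AE x in distr tree_space tree_space (subtree j). (\<lambda>n. depth_value n x) \<longlonglongrightarrow> root_limit x"
      unfolding distr_subtree_tree_space by (rule AE_depth_value_tendsto)
    then show "AE x in tree_space. (\<lambda>n. depth_value n (subtree j x)) \<longlonglongrightarrow> root_limit (subtree j x)"
      by (rule AE_distrD[OF measurable_subtree_tree_space])
  qed
  with AE_depth_value_tendsto AE_space show ?thesis
  proof eventually_elim
    case (elim x)
    have sub: "subtree j x \<in> space tree_space" for j
      using elim(2) by (rule subtree_in_space)
    have "(\<lambda>n. depth_value (Suc n) x) \<longlonglongrightarrow> tree_rec root_limit x"
      unfolding depth_value.simps tree_rec_def
    proof (rule g_tendsto_on_space)
      show "x [] \<in> space \<nu>" using elim(2) by (simp add: space_tree_space)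
    qed (use sub elim(3) in \<open>auto intro: depth_value_nonneg incseq_depth_value\<close>)
    with LIMSEQ_Suc[OF elim(1)] show ?case by (rule LIMSEQ_unique)
  qed
qed

definition limit_law :: "real measure" where
  "limit_law = distr tree_space borel root_limit"

lemma borel_measurable_root_limit: "root_limit \<in> borel_measurable tree_space"
  using measurable_root_limit by (simp add: measurable_S_meas_iff)

lemma law_on_S_limit_law: "law_on_S limit_law"
proof -
  interpret prob_space tree_space by (rule prob_space_tree_space)
  have "real_distribution limit_law"
    unfolding limit_law_def real_distribution_def real_distribution_axioms_def
    using prob_space_distr[OF borel_measurable_root_limit] by simp
  moreover have "emeasure limit_law S_set = emeasure tree_space (space tree_space)"
    unfolding limit_law_def using borel_measurable_root_limit root_limit_nonneg
    by (subst emeasure_distr) (auto simp: S_set_def intro: arg_cong2[where f = emeasure])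
  ultimately show ?thesis by (simp add: law_on_S_def emeasure_space_1)
qed

lemma Tmap_limit_law: "Tmap \<nu> g limit_law = limit_law"
proof -
  have "limit_law = distr tree_space borel (tree_rec root_limit)"
    unfolding limit_law_def using AE_root_limit_tree_rec borel_measurable_root_limit
      measurable_tree_rec[OF measurable_root_limit]
    by (intro distr_cong_AE) (auto simp: measurable_S_meas_iff)
  also have "\<dots> = Tmap \<nu> g limit_law"
    unfolding limit_law_def by (rule distr_tree_rec[OF measurable_root_limit])
  finally show ?thesis by simp
qed

lemma weak_conv_limit_law: "weak_conv_m (\<lambda>n. (Tmap \<nu> g ^^ n) (return borel 0)) limit_law"
proof -
  interpret prob_space tree_space by (rule prob_space_tree_space)
  show ?thesis
    unfolding distr_depth_value[symmetric] limit_law_def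
    using measurable_depth_value incseq_depth_value
    by (intro weak_conv_m_distr_incseq borel_measurable_root_limit AE_depth_value_tendsto)
      (auto simp: measurable_S_meas_iff)
qed

lemma depth_value_le_solution:
  assumes \<xi>: "\<And>u. \<xi> u \<in> space \<nu>" and x: "\<And>u. 0 \<le> x u"
    and rec: "\<And>u. x u = g (fst (\<xi> u)) (snd (\<xi> u)) (\<lambda>j. x (u @ [j]))"
  shows "depth_value n (\<lambda>v. \<xi> (u @ v)) \<le> x u"
proof (induction n arbitrary: u)
  case 0
  show ?case using x by simp
next
  case (Suc n)
  have "depth_value (Suc n) (\<lambda>v. \<xi> (u @ v))
      = g (fst (\<xi> u)) (snd (\<xi> u)) (\<lambda>j. depth_value n (\<lambda>v. \<xi> ((u @ [j]) @ v)))"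
    by (simp add: tree_rec_def subtree_def)
  also have "\<dots> \<le> g (fst (\<xi> u)) (snd (\<xi> u)) (\<lambda>j. x (u @ [j]))"
    using Suc.IH \<xi> by (intro g_mono_on_space depth_value_nonneg)
      (auto simp: space_tree_space simp del: append_assoc)
  also have "\<dots> = x u" by (rule rec[symmetric])
  finally show ?case .
qed

lemma root_limit_le_solution:
  assumes "\<And>u. \<xi> u \<in> space \<nu>" and "\<And>u. 0 \<le> x u"
    and "\<And>u. x u = g (fst (\<xi> u)) (snd (\<xi> u)) (\<lambda>j. x (u @ [j]))"
  shows "root_limit \<xi> \<le> x []"
proof -
  have "(SUP n. ereal (depth_value n \<xi>)) \<le> ereal (x [])"
    using depth_value_le_solution[OF assms, of _ "[]"] by (auto intro: SUP_least)
  moreover have "0 \<le> (SUP n. ereal (depth_value n \<xi>))"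
    using root_limit_nonneg[of \<xi>] by (auto intro: order_trans[OF _ SUP_upper[of 0]])
  ultimately show ?thesis
    unfolding root_limit_def by (cases "SUP n. ereal (depth_value n \<xi>)") auto
qed

lemma AE_limit_law_nonneg: "AE y in limit_law. 0 \<le> y"
  unfolding limit_law_def
  by (subst AE_distr_iff) (auto simp: borel_measurable_root_limit root_limit_nonneg)

lemma AE_root_limit_le_invariant_RTP:
  assumes RTP: "invariant_RTP P T \<nu> g limit_law XiN X"
  shows "AE \<omega> in P. root_limit (\<lambda>w. XiN w \<omega>) \<le> X [] \<omega>"
proof -
  interpret prob_space P using RTP by (simp add: invariant_RTP_def)
  have X: "\<And>w. X w \<in> borel_measurable P"
    and X_law: "\<And>w. distr P borel (X w) = limit_law"
    and rec: "\<And>w. AE \<omega> in P. X w \<omega> = g (fst (XiN w \<omega>)) (snd (XiN w \<omega>)) (\<lambda>j. X (w @ [j]) \<omega>)"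
    using RTP unfolding invariant_RTP_def by auto
  have XiN_space: "XiN w \<omega> \<in> space \<nu>" if "\<omega> \<in> space P" for w \<omega>
    using measurable_space[OF innovations_of_invariant_RTP(2)[OF RTP] that]
    by (simp add: space_tree_space)
  have "AE \<omega> in P. \<forall>w. 0 \<le> X w \<omega>"
  proof (subst AE_all_countable, intro allI)
    fix w
    show "AE \<omega> in P. 0 \<le> X w \<omega>"
      using AE_limit_law_nonneg unfolding X_law[of w, symmetric] by (rule AE_distrD[OF X])
  qed
  moreover have "AE \<omega> in P. \<forall>w. X w \<omega> = g (fst (XiN w \<omega>)) (snd (XiN w \<omega>)) (\<lambda>j. X (w @ [j]) \<omega>)"
    using rec by (subst AE_all_countable) auto
  ultimately show ?thesis
    using AE_space
  proof eventually_elim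
    case (elim \<omega>)
    show ?case by (rule root_limit_le_solution) (use elim XiN_space in blast)+
  qed
qed

lemma endogenous_if_invariant_RTP:
  assumes RTP: "invariant_RTP P T \<nu> g limit_law XiN X"
  shows "endogenous P \<nu> XiN X"
proof -
  interpret prob_space P using RTP by (simp add: invariant_RTP_def)
  define Y where "Y \<omega> = root_limit (\<lambda>w. XiN w \<omega>)" for \<omega>
  note innovations = innovations_of_invariant_RTP[OF RTP]
  have X: "X [] \<in> borel_measurable P" and X_law: "distr P borel (X []) = limit_law"
    using RTP unfolding invariant_RTP_def by auto
  have Y: "Y \<in> borel_measurable P"
    unfolding Y_def by (rule measurable_compose[OF innovations(2) borel_measurable_root_limit])
  have Y_law: "distr P borel Y = limit_law"
    using distr_distr[OF borel_measurable_root_limit innovations(2)] innovations(3)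
    by (simp add: Y_def[abs_def] limit_law_def comp_def)
  have "AE \<omega> in P. Y \<omega> \<le> X [] \<omega>"
    using AE_root_limit_le_invariant_RTP[OF RTP] by (simp add: Y_def)
  then have "AE \<omega> in P. X [] \<omega> = Y \<omega>"
    by (rule AE_eq_if_AE_le_and_distr_eq[OF X Y]) (simp add: X_law Y_law)
  moreover have "Y \<in> borel_measurable (G_sets P \<nu> XiN)"
    unfolding Y_def by (rule measurable_compose[OF innovations(1) borel_measurable_root_limit])
  ultimately show ?thesis
    unfolding endogenous_def by blast
qed

end

theorem lemma15:
  fixes T :: "'t measure"
    and \<nu> :: "('t \<times> enat) measure"
    and g :: "'t \<Rightarrow> enat \<Rightarrow> (nat \<Rightarrow> real) \<Rightarrow> real"
  assumes nu_prob: "prob_space \<nu>"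
    and nu_sets: "sets \<nu> = sets (T \<Otimes>\<^sub>M count_space UNIV)"
    and g_prefix: "depends_on_prefix g"
    and g_meas: "(\<lambda>((\<theta>, m), x). g \<theta> m x)
        \<in> measurable ((T \<Otimes>\<^sub>M count_space UNIV) \<Otimes>\<^sub>M (\<Pi>\<^sub>M i\<in>(UNIV::nat set). S_meas)) S_meas"
    and g_mono: "\<And>\<theta> n x y. \<theta> \<in> space T \<Longrightarrow> 1 \<le> n \<Longrightarrow>
        (\<forall>i. x i \<in> S_set) \<Longrightarrow> (\<forall>i. y i \<in> S_set) \<Longrightarrow>
        (\<forall>i. enat i < n \<longrightarrow> x i \<le> y i) \<Longrightarrow> g \<theta> n x \<le> g \<theta> n y"
    and g_cont: "\<And>\<theta> n xs x. \<theta> \<in> space T \<Longrightarrow> 1 \<le> n \<Longrightarrow>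
        (\<forall>k i. xs k i \<in> S_set) \<Longrightarrow> (\<forall>i. x i \<in> S_set) \<Longrightarrow>
        (\<forall>i. enat i < n \<longrightarrow> incseq (\<lambda>k. xs k i) \<and> (\<lambda>k. xs k i) \<longlonglongrightarrow> x i) \<Longrightarrow>
        (\<lambda>k. g \<theta> n (xs k)) \<longlonglongrightarrow> g \<theta> n x"
    and tight_iter: "tight (\<lambda>n. (Tmap \<nu> g ^^ n) (return borel 0))"
  shows "\<exists>\<mu>. law_on_S \<mu>
           \<and> weak_conv_m (\<lambda>n. (Tmap \<nu> g ^^ n) (return borel 0)) \<mu>
           \<and> Tmap \<nu> g \<mu> = \<mu>
           \<and> (\<forall>(P :: 'w measure) XiN X. invariant_RTP P T \<nu> g \<mu> XiN X \<longrightarrow> endogenous P \<nu> XiN X)"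
proof -
  interpret monotone_RTP T \<nu> g
    by (rule monotone_RTP.intro[OF RTP_model.intro monotone_RTP_axioms.intro]) (fact assms)+
  show ?thesis
    using law_on_S_limit_law weak_conv_limit_law Tmap_limit_law endogenous_if_invariant_RTP
    by blast
qed

end
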